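(* Let $W$ be a finite set, $\mathtt{N}=\{N_1,\ldots,N_r\}$ a sequence of subsets of $W$, and $K(\mathtt{N})$ the associated simplicial complex. Then $K(\mathtt{N})$ has a minimal Taylor resolution.
   Context: The sequence $\mathtt{N}$ may contain repetitions ($N_i=N_j$ for $i\ne j$ allowed). Choose distinct new points $a_1,\ldots,a_r\notin W$, put $\widetilde{N}_i=N_i\sqcup\{a_i\}$ and $V=W\sqcup\{a_1,\ldots,a_r\}$. $K(\mathtt{N})$ is the simplicial complex on vertex set $V$ whose minimal non-faces are exactly $\widetilde{N}_1,\ldots,\widetilde{N}_r$ (its faces are the subsets of $V$ containing no $\widetilde{N}_i$). A minimal non-face of a simplicial complex $K$ is a non-empty vertex subset $N\notin K$ with $N-\{i\}\in K$ for all $i\in N$. If $N_1,\ldots,N_r$ are the minimal non-faces of $K$, the Taylor resolution of the Stanley–Reisner ring $\Bbbk[K]=\Bbbk[v_1,\ldots,v_m]/(v_I\mid I\notin K)$ is the free resolution with degree $-\ell$ term free on $w_{i_1,\ldots,i_\ell}$, $1\le i_1<\cdots<i_\ell\le r$, and differential $d(w_{i_1,\ldots,i_\ell})=\sum_{k}(-1)^{k+1}v_{(N_{i_1}\cup\cdots\cup N_{i_\ell})-(N_{i_1}\cup\cdots\widehat{N_{i_k}}\cdots\cup N_{i_\ell})}w_{i_1,\ldots,\widehat{i_k},\ldots,i_\ell}$ ($v_S=\prod_{s\in S}v_s$, $v_\emptyset=1$). $K$ has a minimal Taylor resolution if $d\otimes_{\Bbbk[v_1,\ldots,v_m]}\Bbbk=0$;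 this is independent of $\Bbbk$ and equivalent to $N_i\not\subset\bigcup_{k\ne i}N_k$ for all $i$. *)

theory Defs
  imports Main
begin

definition min_nonfaces :: "'a set \<Rightarrow> 'a set set \<Rightarrow> 'a set set" where
  "min_nonfaces V K = {M. M \<noteq> {} \<and> M \<subseteq> V \<and> M \<notin> K \<and> (\<forall>i\<in>M. M - {i} \<in> K)}"

text \<open>The complex K(N): new points a 1, ..., a r (distinct, outside W);
  Ntil i = N i plus a i; vertex set V = W together with the new points;
  faces are the subsets of V containing no Ntil i.\<close>

definition Ntil :: "(nat \<Rightarrow> 'a set) \<Rightarrow> (nat \<Rightarrow> 'a) \<Rightarrow> nat \<Rightarrow> 'a set" where
  "Ntil N a i = insert (a i) (N i)"

definition KN_vertices :: "'a set \<Rightarrow> (nat \<Rightarrow> 'a) \<Rightarrow> nat \<Rightarrow> 'a set" where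
  "KN_vertices W a r = W \<union> a ` {1..r}"

definition KN :: "'a set \<Rightarrow> (nat \<Rightarrow> 'a set) \<Rightarrow> (nat \<Rightarrow> 'a) \<Rightarrow> nat \<Rightarrow> 'a set set" where
  "KN W N a r = {\<sigma>. \<sigma> \<subseteq> KN_vertices W a r \<and> (\<forall>i\<in>{1..r}. \<not> Ntil N a i \<subseteq> \<sigma>)}"

text \<open>Coefficient monomial of the Taylor differential: for a set F of minimal non-faces
  (the basis element w_F) and M in F, the coefficient of w_(F - M) in d(w_F) is
  +- v_S with S = (Union F) - (Union (F - {M})).  After tensoring with a field,
  v_S becomes 1 if S is empty and 0 otherwise; since the w_(F - M) are distinct basis
  elements, d tensor k = 0 iff every such S is nonempty.\<close>

definition taylor_coeff_support :: "'a set set \<Rightarrow> 'a set \<Rightarrow> 'a set" where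
  "taylor_coeff_support F M = \<Union>F - \<Union>(F - {M})"

definition has_minimal_taylor_resolution :: "'a set \<Rightarrow> 'a set set \<Rightarrow> bool" where
  "has_minimal_taylor_resolution V K \<longleftrightarrow>
     (\<forall>F \<subseteq> min_nonfaces V K. \<forall>M\<in>F. taylor_coeff_support F M \<noteq> {})"

end

theory Submission
  imports Defs
begin

text \<open>Every minimal non-face of K(N) is one of the sets \<open>Ntil N a i\<close>, and
  \<open>Ntil N a i\<close> is the only one of them containing the new vertex \<open>a i\<close>. So no minimal
  non-face lies in the union of the others, which is the criterion for a minimal
  Taylor resolution.\<close>

lemma has_minimal_taylor_resolution_iff:
  "has_minimal_taylor_resolution V K \<longleftrightarrow>
     (\<forall>M \<in> min_nonfaces V K. \<not> M \<subseteq> \<Union>(min_nonfaces V K - {M}))"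
proof
  assume "has_minimal_taylor_resolution V K"
  then show "\<forall>M \<in> min_nonfaces V K. \<not> M \<subseteq> \<Union>(min_nonfaces V K - {M})"
    unfolding has_minimal_taylor_resolution_def taylor_coeff_support_def by blast
next
  assume no_cover: "\<forall>M \<in> min_nonfaces V K. \<not> M \<subseteq> \<Union>(min_nonfaces V K - {M})"
  show "has_minimal_taylor_resolution V K"
    unfolding has_minimal_taylor_resolution_def taylor_coeff_support_def
  proof (intro allI impI ballI)
    fix F M assume "F \<subseteq> min_nonfaces V K" "M \<in> F"
    moreover from this no_cover obtain x where "x \<in> M" "x \<notin> \<Union>(min_nonfaces V K - {M})"
      by blast
    ultimately show "\<Union>F - \<Union>(F - {M}) \<noteq> {}" by blast
  qed
qed

lemma min_nonfaces_of_forbidden_sets: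
  "min_nonfaces V {\<sigma>. \<sigma> \<subseteq> V \<and> (\<forall>B \<in> \<B>. \<not> B \<subseteq> \<sigma>)} \<subseteq> \<B>"
proof
  let ?K = "{\<sigma>. \<sigma> \<subseteq> V \<and> (\<forall>B \<in> \<B>. \<not> B \<subseteq> \<sigma>)}"
  fix M assume M: "M \<in> min_nonfaces V ?K"
  then obtain B where B: "B \<in> \<B>" "B \<subseteq> M" by (auto simp: min_nonfaces_def)
  have "M = B"
  proof (rule ccontr)
    assume "M \<noteq> B"
    then obtain x where "x \<in> M" "x \<notin> B" using B by blast
    with M have "M - {x} \<in> ?K" by (simp add: min_nonfaces_def)
    moreover have "B \<subseteq> M - {x}" using B \<open>x \<notin> B\<close> by blast
    ultimately show False using B by blast
  qed
  with B show "M \<in> \<B>" by simp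
qed

lemma KN_eq_forbidden_sets:
  "KN W N a r = {\<sigma>. \<sigma> \<subseteq> KN_vertices W a r \<and> (\<forall>B \<in> Ntil N a ` {1..r}. \<not> B \<subseteq> \<sigma>)}"
  by (auto simp: KN_def)

lemma new_vertex_only_in_own_Ntil:
  assumes "\<forall>i\<in>{1..r}. N i \<subseteq> W" "inj_on a {1..r}" "a ` {1..r} \<inter> W = {}"
    and "i \<in> {1..r}" "j \<in> {1..r}" "a i \<in> Ntil N a j"
  shows "i = j"
proof -
  have "a i \<notin> N j" using assms(1,3-5) by blast
  then have "a i = a j" using assms(6) by (simp add: Ntil_def)
  then show ?thesis using inj_onD[OF assms(2)] assms(4,5) by blast
qed

theorem corollary2p2:
  fixes W :: "'a set" and N :: "nat \<Rightarrow> 'a set" and a :: "nat \<Rightarrow> 'a" and r :: nat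
  assumes "finite W"
    and "\<forall>i\<in>{1..r}. N i \<subseteq> W"
    and "inj_on a {1..r}"
    and "a ` {1..r} \<inter> W = {}"
  shows "has_minimal_taylor_resolution (KN_vertices W a r) (KN W N a r)"
  unfolding has_minimal_taylor_resolution_iff
proof
  let ?mnf = "min_nonfaces (KN_vertices W a r) (KN W N a r)"
  have mnf: "?mnf \<subseteq> Ntil N a ` {1..r}"
    unfolding KN_eq_forbidden_sets by (rule min_nonfaces_of_forbidden_sets)
  fix M assume "M \<in> ?mnf"
  with mnf obtain i where i: "i \<in> {1..r}" "M = Ntil N a i" by blast
  have "a i \<notin> \<Union>(?mnf - {M})"
    using mnf i new_vertex_only_in_own_Ntil[OF assms(2-4) i(1)] by blast
  moreover have "a i \<in> M" using i by (simp add: Ntil_def)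
  ultimately show "\<not> M \<subseteq> \<Union>(?mnf - {M})" by blast
qed

end
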